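(* In the setting of the context, for each $u\in U$ let $\mathbf{I}_u$ indicate whether $u$ is matched by MMP-ALG after the $T$ online rounds, and let $x^*_u=\sum_{e\in E(u)}x^*_e$. Then, when $T\to\infty$ and $|U|=o(\sqrt{T})$, the random variables $\{\mathbf{I}_u:u\in U\}$ are asymptotically independent and each satisfies $\Pr[\mathbf{I}_u=1]\to 1-e^{-x^*_u}$.
   Context: Bipartite graph $G=(U,V,E)$; online rounds $t=1,\dots,T$, in each of which independently at most one $v\in V$ arrives, $v$ with probability $p_v$, $\sum_v p_v\le1$, $r_v=Tp_v\in[0,1]$. Each $u\in U$ can be matched at most once. $E(w)$ denotes the set of edges incident to $w$. $\mathbf{x}^*\in[0,1]^E$ satisfies $\sum_{e\in E(v)}x^*_e\le r_v$ for all $v\in V$ and $\sum_{e\in E(u)}x^*_e\le1$ for all $u\in U$. MMP-ALG: when $v$ arrives, sample at most one edge $e\in E(v)$, each $e$ with probability $x^*_e/r_v$; if $e=(u,v)$ is sampled and $u$ is still unmatched, match $e$, otherwise skip. *)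

theory Defs
  imports "HOL-Probability.Probability" "HOL-Library.Landau_Symbols"
begin

text \<open>Edges are pairs (u,v) with u in U (offline side) and v in V (online side).\<close>

definition edges_at_v :: "('u \<times> 'v) set \<Rightarrow> 'v \<Rightarrow> ('u \<times> 'v) set" where
  "edges_at_v E v = {e \<in> E. snd e = v}"

definition edges_at_u :: "('u \<times> 'v) set \<Rightarrow> 'u \<Rightarrow> ('u \<times> 'v) set" where
  "edges_at_u E u = {e \<in> E. fst e = u}"

definition xstar_u :: "('u \<times> 'v) set \<Rightarrow> (('u \<times> 'v) \<Rightarrow> real) \<Rightarrow> 'u \<Rightarrow> real" where
  "xstar_u E x u = (\<Sum>e\<in>edges_at_u E u. x e)"

definition arrival_pmf :: "'v set \<Rightarrow> ('v \<Rightarrow> real) \<Rightarrow> 'v option pmf" where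
  "arrival_pmf V p = embed_pmf (\<lambda>w. case w of
       None \<Rightarrow> 1 - sum p V
     | Some v \<Rightarrow> (if v \<in> V then p v else 0))"

definition edge_pmf :: "('u \<times> 'v) set \<Rightarrow> (('u \<times> 'v) \<Rightarrow> real) \<Rightarrow> real \<Rightarrow> 'v \<Rightarrow> ('u \<times> 'v) option pmf" where
  "edge_pmf E x r v = embed_pmf (\<lambda>w. case w of
       None \<Rightarrow> 1 - (\<Sum>e\<in>edges_at_v E v. x e) / r
     | Some e \<Rightarrow> (if e \<in> edges_at_v E v then x e / r else 0))"

definition mmp_round :: "'v set \<Rightarrow> ('u \<times> 'v) set \<Rightarrow> ('v \<Rightarrow> real) \<Rightarrow> (('u \<times> 'v) \<Rightarrow> real) \<Rightarrow> nat
    \<Rightarrow> ('u \<times> 'v) option pmf" where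
  "mmp_round V E p x T = bind_pmf (arrival_pmf V p) (\<lambda>w. case w of
       None \<Rightarrow> return_pmf None
     | Some v \<Rightarrow> edge_pmf E x (real T * p v) v)"

definition mmp_step :: "('u \<times> 'v) set \<Rightarrow> ('u \<times> 'v) option \<Rightarrow> ('u \<times> 'v) set" where
  "mmp_step M w = (case w of
       None \<Rightarrow> M
     | Some e \<Rightarrow> (if fst e \<in> fst ` M then M else insert e M))"

fun mmp_run :: "'v set \<Rightarrow> ('u \<times> 'v) set \<Rightarrow> ('v \<Rightarrow> real) \<Rightarrow> (('u \<times> 'v) \<Rightarrow> real) \<Rightarrow> nat
    \<Rightarrow> nat \<Rightarrow> ('u \<times> 'v) set pmf" where
  "mmp_run V E p x T 0 = return_pmf {}"
| "mmp_run V E p x T (Suc n) =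
     bind_pmf (mmp_run V E p x T n) (\<lambda>M. map_pmf (mmp_step M) (mmp_round V E p x T))"

text \<open>Joint law of (I_u)_u, represented as the random set of matched U-vertices after T rounds.\<close>
definition matched_pmf :: "'v set \<Rightarrow> ('u \<times> 'v) set \<Rightarrow> ('v \<Rightarrow> real) \<Rightarrow> (('u \<times> 'v) \<Rightarrow> real) \<Rightarrow> nat
    \<Rightarrow> 'u set pmf" where
  "matched_pmf V E p x T = map_pmf (\<lambda>M. fst ` M) (mmp_run V E p x T T)"

definition marg :: "'u set pmf \<Rightarrow> 'u \<Rightarrow> real" where
  "marg Q u = measure_pmf.prob Q {S. u \<in> S}"

definition prod_marg_mass :: "'u set \<Rightarrow> 'u set pmf \<Rightarrow> 'u set \<Rightarrow> real" where
  "prod_marg_mass U Q S = (\<Prod>u\<in>U. if u \<in> S then marg Q u else 1 - marg Q u)"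

definition tv_from_indep :: "'u set \<Rightarrow> 'u set pmf \<Rightarrow> real" where
  "tv_from_indep U Q = (1/2) * (\<Sum>S\<in>Pow U. \<bar>pmf Q S - prod_marg_mass U Q S\<bar>)"

end

theory Submission
  imports Defs
begin

text \<open>
  Call \<open>H\<close> the set of offline vertices hit by the edge sampled in one round: it is empty or a
  singleton \<open>{u}\<close>, the latter with probability \<open>q\<^sub>u = x*\<^sub>u / T\<close>, and the matched set after
  \<open>n\<close> rounds is the union of \<open>n\<close> independent copies of \<open>H\<close>. The law of \<open>H\<close> is within \<open>L\<^sub>1\<close>
  distance \<open>2 (\<Sum>\<^sub>u q\<^sub>u)\<^sup>2\<close> of the random set containing each \<open>u\<close> independently with probability
  \<open>q\<^sub>u\<close>. Unions of independent copies of such product sets are again product sets, with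
  probabilities \<open>1 - (1 - q\<^sub>u)\<^sup>n\<close>, and each further union step adds at most the one-round
  distance to the \<open>L\<^sub>1\<close> distance. Hence after \<open>T\<close> rounds the matched set is within
  \<open>2 T (|U| / T)\<^sup>2\<close> of the product of its own marginals \<open>1 - (1 - x*\<^sub>u / T)\<^sup>T\<close>; this is
  \<open>o(1)\<close> when \<open>|U| = o(\<surd>T)\<close>, and \<open>(1 - a / T)\<^sup>T \<rightarrow> e\<^sup>-\<^sup>a\<close> uniformly in \<open>a \<in> [0, 1]\<close>.
\<close>

section \<open>\<open>L\<^sub>1\<close> distance of distributions on a finite set\<close>

definition l1_dist :: "'a set \<Rightarrow> 'a pmf \<Rightarrow> 'a pmf \<Rightarrow> real" where
  "l1_dist W P Q = (\<Sum>w\<in>W. \<bar>pmf P w - pmf Q w\<bar>)"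

lemma pmf_bind_eq_sum:
  assumes "finite W" "set_pmf P \<subseteq> W"
  shows "pmf (bind_pmf P f) y = (\<Sum>s\<in>W. pmf (f s) y * pmf P s)"
  unfolding pmf_bind using assms by (intro integral_measure_pmf_real) auto

lemma l1_dist_bind_le:
  assumes W: "finite W" and P: "set_pmf P \<subseteq> W" and Q: "set_pmf Q \<subseteq> W"
    and f: "\<And>s. s \<in> W \<Longrightarrow> set_pmf (f s) \<subseteq> W"
    and fg: "\<And>s. s \<in> W \<Longrightarrow> l1_dist W (f s) (g s) \<le> c"
  shows "l1_dist W (bind_pmf P f) (bind_pmf Q g) \<le> l1_dist W P Q + c"
proof -
  have term_le: "\<bar>pmf (f s) w * pmf P s - pmf (g s) w * pmf Q s\<bar>
      \<le> pmf (f s) w * \<bar>pmf P s - pmf Q s\<bar> + pmf Q s * \<bar>pmf (f s) w - pmf (g s) w\<bar>" for s w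
  proof -
    have "pmf (f s) w * pmf P s - pmf (g s) w * pmf Q s
        = pmf (f s) w * (pmf P s - pmf Q s) + pmf Q s * (pmf (f s) w - pmf (g s) w)"
      by (simp add: algebra_simps)
    then show ?thesis
      by (metis abs_mult abs_of_nonneg abs_triangle_ineq pmf_nonneg)
  qed
  have "l1_dist W (bind_pmf P f) (bind_pmf Q g)
      \<le> (\<Sum>w\<in>W. \<Sum>s\<in>W. pmf (f s) w * \<bar>pmf P s - pmf Q s\<bar> + pmf Q s * \<bar>pmf (f s) w - pmf (g s) w\<bar>)"
    unfolding l1_dist_def using W P Q
    by (auto simp: pmf_bind_eq_sum sum_subtractf[symmetric]
        intro!: sum_mono order.trans[OF sum_abs] term_le)
  also have "\<dots> = (\<Sum>s\<in>W. \<bar>pmf P s - pmf Q s\<bar> * (\<Sum>w\<in>W. pmf (f s) w) + pmf Q s * l1_dist W (f s) (g s))"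
    by (subst sum.swap) (simp add: l1_dist_def sum.distrib sum_distrib_left sum_distrib_right mult.commute)
  also have "\<dots> \<le> (\<Sum>s\<in>W. \<bar>pmf P s - pmf Q s\<bar> + pmf Q s * c)"
    using W f fg by (intro sum_mono add_mono mult_left_mono) (simp_all add: sum_pmf_eq_1)
  also have "\<dots> = l1_dist W P Q + c"
    using W Q by (simp add: l1_dist_def sum.distrib sum_distrib_right[symmetric] sum_pmf_eq_1)
  finally show ?thesis .
qed

lemma l1_dist_map_le:
  assumes "finite W" "set_pmf P \<subseteq> W" "set_pmf Q \<subseteq> W" "h ` W \<subseteq> W"
  shows "l1_dist W (map_pmf h P) (map_pmf h Q) \<le> l1_dist W P Q"
  using l1_dist_bind_le[of W P Q "\<lambda>s. return_pmf (h s)" "\<lambda>s. return_pmf (h s)" 0] assms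
  by (auto simp: map_pmf_def l1_dist_def)

lemma l1_dist_eq_twice_excess:
  assumes "finite W" "set_pmf P \<subseteq> W" "set_pmf Q \<subseteq> W"
  shows "l1_dist W P Q = 2 * (\<Sum>w\<in>W. max (pmf P w - pmf Q w) 0)"
proof -
  have "(\<Sum>w\<in>W. pmf P w - pmf Q w) = 0"
    using assms by (simp add: sum_subtractf sum_pmf_eq_1)
  moreover have "\<bar>d\<bar> = 2 * max d 0 - d" for d :: real
    by (simp add: max_def abs_if)
  ultimately show ?thesis
    unfolding l1_dist_def by (simp add: sum_subtractf sum_distrib_left)
qed

section \<open>Random sets with independent memberships\<close>

definition indep_set_pmf :: "'a set \<Rightarrow> ('a \<Rightarrow> real) \<Rightarrow> 'a set pmf" where
  "indep_set_pmf A a = map_pmf (\<lambda>b. {x\<in>A. b x}) (Pi_pmf A False (\<lambda>x. bernoulli_pmf (a x)))"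

lemma set_indep_set_pmf: "set_pmf (indep_set_pmf A a) \<subseteq> Pow A"
  unfolding indep_set_pmf_def by auto

lemma pmf_indep_set_pmf:
  assumes A: "finite A" and S: "S \<subseteq> A" and a: "\<And>x. x \<in> A \<Longrightarrow> 0 \<le> a x \<and> a x \<le> 1"
  shows "pmf (indep_set_pmf A a) S = (\<Prod>x\<in>A. if x \<in> S then a x else 1 - a x)"
proof -
  let ?P = "Pi_pmf A False (\<lambda>x. bernoulli_pmf (a x))"
  have "(\<lambda>b. {x\<in>A. b x}) -` {S} \<inter> set_pmf ?P = {\<lambda>x. x \<in> S} \<inter> set_pmf ?P"
    using set_Pi_pmf_subset[OF A, of False] S by (auto simp: fun_eq_iff)
  then have "pmf (indep_set_pmf A a) S = pmf ?P (\<lambda>x. x \<in> S)"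
    unfolding indep_set_pmf_def pmf_map
    by (metis measure_Int_set_pmf measure_pmf_single)
  also have "\<dots> = (\<Prod>x\<in>A. if x \<in> S then a x else 1 - a x)"
    using A S a by (subst pmf_Pi) (auto intro!: prod.cong)
  finally show ?thesis .
qed

lemma pmf_indep_set_pmf_empty_ge:
  assumes "finite A" and "\<And>x. x \<in> A \<Longrightarrow> 0 \<le> a x \<and> a x \<le> 1"
  shows "1 - sum a A \<le> pmf (indep_set_pmf A a) {}"
  using assms by (simp add: pmf_indep_set_pmf Weierstrass_prod_ineq)

lemma pmf_indep_set_pmf_singleton_ge:
  assumes A: "finite A" and a: "\<And>x. x \<in> A \<Longrightarrow> 0 \<le> a x \<and> a x \<le> 1" and x: "x \<in> A"
  shows "a x * (1 - sum a A) \<le> pmf (indep_set_pmf A a) {x}"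
proof -
  have "1 - sum a A \<le> 1 - sum a (A - {x})"
    using A a by (intro diff_left_mono sum_mono2) auto
  also have "\<dots> \<le> (\<Prod>y\<in>A - {x}. 1 - a y)"
    using a by (intro Weierstrass_prod_ineq) auto
  finally have "a x * (1 - sum a A) \<le> a x * (\<Prod>y\<in>A - {x}. 1 - a y)"
    using a x by (simp add: mult_left_mono)
  also have "\<dots> = pmf (indep_set_pmf A a) {x}"
    using A x a by (simp add: pmf_indep_set_pmf) (subst prod.remove[OF A x], auto intro!: prod.cong)
  finally show ?thesis .
qed

lemma indep_set_pmf_zero: "finite A \<Longrightarrow> indep_set_pmf A (\<lambda>_. 0) = return_pmf {}"
proof -
  assume "finite A"
  moreover have "bernoulli_pmf 0 = return_pmf False"
    by (rule pmf_eqI) (simp split: split_indicator)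
  ultimately show ?thesis
    unfolding indep_set_pmf_def by simp
qed

lemma bernoulli_pmf_disj:
  assumes "0 \<le> a" "a \<le> 1" "0 \<le> b" "b \<le> 1"
  shows "bind_pmf (bernoulli_pmf a) (\<lambda>c. map_pmf (\<lambda>d. c \<or> d) (bernoulli_pmf b))
       = bernoulli_pmf (1 - (1 - a) * (1 - b))"
proof (rule pmf_eqI)
  have "0 \<le> 1 - (1 - a) * (1 - b)" "1 - (1 - a) * (1 - b) \<le> 1"
    using assms by (auto simp: mult_le_one)
  then show "pmf (bind_pmf (bernoulli_pmf a) (\<lambda>c. map_pmf (\<lambda>d. c \<or> d) (bernoulli_pmf b))) i
      = pmf (bernoulli_pmf (1 - (1 - a) * (1 - b))) i" for i
    using assms by (cases i) (simp_all add: map_pmf_def pmf_bind algebra_simps)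
qed

lemma indep_set_pmf_union:
  assumes A: "finite A" and a: "\<And>x. x \<in> A \<Longrightarrow> 0 \<le> a x \<and> a x \<le> 1"
    and b: "\<And>x. x \<in> A \<Longrightarrow> 0 \<le> b x \<and> b x \<le> 1"
  shows "bind_pmf (indep_set_pmf A a) (\<lambda>S. map_pmf ((\<union>) S) (indep_set_pmf A b))
       = indep_set_pmf A (\<lambda>x. 1 - (1 - a x) * (1 - b x))"
proof -
  let ?Pa = "Pi_pmf A False (\<lambda>x. bernoulli_pmf (a x))"
  let ?Pb = "Pi_pmf A False (\<lambda>x. bernoulli_pmf (b x))"
  have "Pi_pmf A False (\<lambda>x. bernoulli_pmf (1 - (1 - a x) * (1 - b x)))
      = Pi_pmf A False (\<lambda>x. bind_pmf (bernoulli_pmf (a x)) (\<lambda>c. map_pmf (\<lambda>d. c \<or> d) (bernoulli_pmf (b x))))"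
    using a b by (intro Pi_pmf_cong) (auto simp: bernoulli_pmf_disj)
  also have "\<dots> = bind_pmf ?Pa (\<lambda>f. Pi_pmf A False (\<lambda>x. map_pmf (\<lambda>d. f x \<or> d) (bernoulli_pmf (b x))))"
    using A by (rule Pi_pmf_bind)
  also have "\<dots> = bind_pmf ?Pa (\<lambda>f. map_pmf (\<lambda>h x. f x \<or> h x) ?Pb)"
  proof (intro bind_pmf_cong refl)
    fix f assume f: "f \<in> set_pmf ?Pa"
    have "Pi_pmf A False (\<lambda>x. map_pmf (\<lambda>d. f x \<or> d) (bernoulli_pmf (b x)))
        = bind_pmf ?Pb (\<lambda>h. Pi_pmf A False (\<lambda>x. return_pmf (f x \<or> h x)))"
      unfolding map_pmf_def using A by (rule Pi_pmf_bind)
    also have "\<dots> = map_pmf (\<lambda>h x. f x \<or> h x) ?Pb"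
      using A f set_Pi_pmf_subset[OF A, of False "\<lambda>x. bernoulli_pmf (a x)"]
        set_Pi_pmf_subset[OF A, of False "\<lambda>x. bernoulli_pmf (b x)"]
      by (auto simp: map_pmf_def fun_eq_iff intro!: bind_pmf_cong) blast+
    finally show "Pi_pmf A False (\<lambda>x. map_pmf (\<lambda>d. f x \<or> d) (bernoulli_pmf (b x)))
        = map_pmf (\<lambda>h x. f x \<or> h x) ?Pb" .
  qed
  finally show ?thesis
    unfolding indep_set_pmf_def
    by (auto simp: map_bind_pmf bind_map_pmf pmf.map_comp o_def intro!: bind_pmf_cong map_pmf_cong)
qed

lemma marg_nonneg: "0 \<le> marg Q x"
  unfolding marg_def by simp

lemma marg_le_1: "marg Q x \<le> 1"
  unfolding marg_def by simp

lemma map_pmf_mem_eq_bernoulli_marg: "map_pmf (\<lambda>S. x \<in> S) Q = bernoulli_pmf (marg Q x)"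
proof (rule pmf_eqI)
  fix i :: bool
  have "measure_pmf.prob Q {S. x \<notin> S} = 1 - marg Q x"
    unfolding marg_def by (subst measure_pmf.prob_compl[symmetric]) (auto intro!: arg_cong2[where f = measure])
  then show "pmf (map_pmf (\<lambda>S. x \<in> S) Q) i = pmf (bernoulli_pmf (marg Q x)) i"
    by (cases i) (simp_all add: pmf_map vimage_def marg_def)
qed

lemma marg_eq_pmf_singleton:
  assumes "set_pmf H \<subseteq> insert {} ((\<lambda>x. {x}) ` A)"
  shows "marg H x = pmf H {x}"
proof -
  have "{S. x \<in> S} \<inter> set_pmf H = {{x}} \<inter> set_pmf H"
    using assms by auto
  then show ?thesis
    unfolding marg_def by (metis measure_Int_set_pmf measure_pmf_single)
qed

lemma pmf_empty_eq_singleton_valued: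
  assumes A: "finite A" and H: "set_pmf H \<subseteq> insert {} ((\<lambda>x. {x}) ` A)"
  shows "pmf H {} = 1 - (\<Sum>x\<in>A. marg H x)"
proof -
  have "pmf H {} + (\<Sum>x\<in>A. marg H x) = (\<Sum>w\<in>insert {} ((\<lambda>x. {x}) ` A). pmf H w)"
    using A marg_eq_pmf_singleton[OF H]
    by (subst sum.insert) (auto simp: sum.reindex inj_on_def)
  also have "\<dots> = 1"
    using A H by (intro sum_pmf_eq_1) auto
  finally show ?thesis
    by simp
qed

lemma tv_from_indep_eq_l1_dist:
  assumes "finite A"
  shows "tv_from_indep A Q = l1_dist (Pow A) Q (indep_set_pmf A (marg Q)) / 2"
  unfolding tv_from_indep_def l1_dist_def prod_marg_mass_def
  using assms by (simp add: pmf_indep_set_pmf marg_nonneg marg_le_1)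

lemma tv_from_indep_nonneg: "0 \<le> tv_from_indep A Q"
  unfolding tv_from_indep_def by (auto intro: sum_nonneg)

lemma l1_dist_singleton_valued_le:
  assumes A: "finite A" and H: "set_pmf H \<subseteq> insert {} ((\<lambda>x. {x}) ` A)"
  shows "l1_dist (Pow A) H (indep_set_pmf A (marg H)) \<le> 2 * (\<Sum>x\<in>A. marg H x)^2"
proof -
  define q where "q = marg H"
  define Q where "Q = (\<Sum>x\<in>A. q x)"
  let ?B = "indep_set_pmf A q"
  let ?excess = "\<lambda>w. max (pmf H w - pmf ?B w) 0"
  have q: "0 \<le> q x \<and> q x \<le> 1" for x
    by (simp add: q_def marg_nonneg marg_le_1)
  have Q: "0 \<le> Q"
    unfolding Q_def using q by (simp add: sum_nonneg)
  have pmf_H_singleton: "pmf H {x} = q x" for x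
    using marg_eq_pmf_singleton[OF H] by (simp add: q_def)
  have excess_empty: "?excess {} = 0"
    using pmf_indep_set_pmf_empty_ge[OF A, of q] q pmf_empty_eq_singleton_valued[OF A H]
    by (simp add: Q_def q_def)
  have excess_singleton: "?excess {x} \<le> q x * Q" if "x \<in> A" for x
    using pmf_indep_set_pmf_singleton_ge[OF A _ that, of q] q Q
    by (simp add: pmf_H_singleton Q_def algebra_simps)
  have "(\<Sum>w\<in>Pow A. ?excess w) = (\<Sum>w\<in>insert {} ((\<lambda>x. {x}) ` A). ?excess w)"
  proof (intro sum.mono_neutral_right)
    show "\<forall>w\<in>Pow A - insert {} ((\<lambda>x. {x}) ` A). ?excess w = 0"
    proof
      fix w assume "w \<in> Pow A - insert {} ((\<lambda>x. {x}) ` A)"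
      then have "pmf H w = 0"
        using H by (auto simp: pmf_eq_0_set_pmf)
      then show "?excess w = 0"
        by simp
    qed
  qed (use A in auto)
  also have "\<dots> = (\<Sum>x\<in>A. ?excess {x})"
    using A excess_empty by (subst sum.insert) (auto simp: sum.reindex inj_on_def)
  also have "\<dots> \<le> (\<Sum>x\<in>A. q x * Q)"
    by (intro sum_mono excess_singleton)
  also have "\<dots> = Q^2"
    by (simp add: Q_def sum_distrib_right power2_eq_square)
  finally have excess_le: "(\<Sum>w\<in>Pow A. ?excess w) \<le> Q^2" .
  have "l1_dist (Pow A) H ?B = 2 * (\<Sum>w\<in>Pow A. ?excess w)"
    using A H set_indep_set_pmf[of A q] by (intro l1_dist_eq_twice_excess) auto
  then show ?thesis
    using excess_le by (simp add: q_def Q_def)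
qed

section \<open>Unions of independent copies of a random set\<close>

primrec iid_union_pmf :: "'a set pmf \<Rightarrow> nat \<Rightarrow> 'a set pmf" where
  "iid_union_pmf H 0 = return_pmf {}"
| "iid_union_pmf H (Suc n) = bind_pmf (iid_union_pmf H n) (\<lambda>S. map_pmf ((\<union>) S) H)"

lemma set_iid_union_pmf: "set_pmf H \<subseteq> Pow A \<Longrightarrow> set_pmf (iid_union_pmf H n) \<subseteq> Pow A"
  by (induction n) auto

lemma iid_union_indep_set_pmf:
  assumes A: "finite A" and a: "\<And>x. x \<in> A \<Longrightarrow> 0 \<le> a x \<and> a x \<le> 1"
  shows "iid_union_pmf (indep_set_pmf A a) n = indep_set_pmf A (\<lambda>x. 1 - (1 - a x) ^ n)"
proof (induction n)
  case 0
  then show ?case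
    using indep_set_pmf_zero[OF A] by simp
next
  case (Suc n)
  have "0 \<le> 1 - (1 - a x) ^ n \<and> 1 - (1 - a x) ^ n \<le> 1" if "x \<in> A" for x
    using a[OF that] by (simp add: power_le_one)
  then show ?case
    using Suc A a by (simp add: indep_set_pmf_union mult.commute)
qed

lemma l1_dist_iid_union_le:
  assumes A: "finite A" and H: "set_pmf H \<subseteq> Pow A" and H': "set_pmf H' \<subseteq> Pow A"
    and c: "l1_dist (Pow A) H H' \<le> c"
  shows "l1_dist (Pow A) (iid_union_pmf H n) (iid_union_pmf H' n) \<le> n * c"
proof (induction n)
  case 0
  then show ?case
    by (simp add: l1_dist_def)
next
  case (Suc n)
  have "l1_dist (Pow A) (iid_union_pmf H (Suc n)) (iid_union_pmf H' (Suc n))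
      \<le> l1_dist (Pow A) (iid_union_pmf H n) (iid_union_pmf H' n) + c"
    unfolding iid_union_pmf.simps
  proof (rule l1_dist_bind_le)
    fix S assume S: "S \<in> Pow A"
    then show "set_pmf (map_pmf ((\<union>) S) H) \<subseteq> Pow A"
      using H by auto
    have "l1_dist (Pow A) (map_pmf ((\<union>) S) H) (map_pmf ((\<union>) S) H') \<le> l1_dist (Pow A) H H'"
      using A H H' S by (intro l1_dist_map_le) auto
    then show "l1_dist (Pow A) (map_pmf ((\<union>) S) H) (map_pmf ((\<union>) S) H') \<le> c"
      using c by linarith
  qed (use A H H' set_iid_union_pmf[OF H] set_iid_union_pmf[OF H'] in auto)
  then show ?case
    using Suc by (simp add: algebra_simps)
qed

lemma marg_iid_union_pmf: "marg (iid_union_pmf H n) x = 1 - (1 - marg H x) ^ n"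
proof (induction n)
  case 0
  then show ?case
    by (simp add: marg_def)
next
  case (Suc n)
  have "bernoulli_pmf (marg (iid_union_pmf H (Suc n)) x)
      = bind_pmf (map_pmf (\<lambda>S. x \<in> S) (iid_union_pmf H n))
          (\<lambda>c. map_pmf (\<lambda>d. c \<or> d) (map_pmf (\<lambda>S. x \<in> S) H))"
    by (simp add: map_pmf_mem_eq_bernoulli_marg[symmetric] map_bind_pmf bind_map_pmf pmf.map_comp o_def)
  also have "\<dots> = bernoulli_pmf (1 - (1 - marg (iid_union_pmf H n) x) * (1 - marg H x))"
    by (simp add: map_pmf_mem_eq_bernoulli_marg bernoulli_pmf_disj marg_nonneg marg_le_1)
  finally have "pmf (bernoulli_pmf (marg (iid_union_pmf H (Suc n)) x)) True
      = pmf (bernoulli_pmf (1 - (1 - marg (iid_union_pmf H n) x) * (1 - marg H x))) True"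
    by (rule arg_cong)
  moreover have "(1 - marg (iid_union_pmf H n) x) * (1 - marg H x) \<le> 1"
    by (intro mult_le_one) (simp_all add: marg_nonneg marg_le_1)
  ultimately show ?case
    using Suc by (simp add: marg_nonneg marg_le_1)
qed

lemma tv_from_indep_iid_union_le:
  assumes A: "finite A" and H: "set_pmf H \<subseteq> insert {} ((\<lambda>x. {x}) ` A)"
  shows "tv_from_indep A (iid_union_pmf H n) \<le> n * (\<Sum>x\<in>A. marg H x)^2"
proof -
  have "marg (iid_union_pmf H n) = (\<lambda>x. 1 - (1 - marg H x) ^ n)"
    by (simp add: fun_eq_iff marg_iid_union_pmf)
  then have "indep_set_pmf A (marg (iid_union_pmf H n)) = iid_union_pmf (indep_set_pmf A (marg H)) n"
    using A by (simp add: iid_union_indep_set_pmf marg_nonneg marg_le_1)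
  moreover have "l1_dist (Pow A) (iid_union_pmf H n) (iid_union_pmf (indep_set_pmf A (marg H)) n)
      \<le> n * (2 * (\<Sum>x\<in>A. marg H x)^2)"
    using A H set_indep_set_pmf[of A "marg H"] l1_dist_singleton_valued_le[OF A H]
    by (intro l1_dist_iid_union_le) auto
  ultimately show ?thesis
    using A by (simp add: tv_from_indep_eq_l1_dist)
qed

section \<open>Asymptotics\<close>

lemma one_minus_div_power_approx_exp:
  fixes a :: real and n :: nat
  assumes a: "0 \<le> a" "a \<le> 1" and n: "2 \<le> n"
  shows "\<bar>(1 - a / real n) ^ n - exp (- a)\<bar> \<le> 2 / real n"
proof -
  define y where "y = a / real n"
  have y: "0 \<le> y" "y \<le> 1/2"
    using a n by (simp_all add: y_def divide_le_eq)
  have a_eq: "a = real n * y"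
    using n by (simp add: y_def)
  have upper: "(1 - y) ^ n \<le> exp (- a)"
  proof -
    have "(1 - y) ^ n \<le> exp (- y) ^ n"
      using y exp_ge_add_one_self[of "- y"] by (intro power_mono) auto
    also have "\<dots> = exp (- a)"
      by (simp add: a_eq exp_of_nat_mult[symmetric])
    finally show ?thesis .
  qed
  have "exp (- a) * (1 - 2 * a^2 / real n) \<le> exp (- a) * exp (- (2 * a^2 / real n))"
    using exp_ge_add_one_self[of "- (2 * a^2 / real n)"] by (intro mult_left_mono) auto
  also have "\<dots> = exp (real n * (- y - 2 * y^2))"
    using n by (simp add: a_eq exp_add[symmetric] power2_eq_square algebra_simps)
  also have "\<dots> \<le> exp (real n * ln (1 - y))"
    using ln_one_minus_pos_lower_bound[OF y] by (intro exp_mono mult_left_mono) auto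
  also have "\<dots> = (1 - y) ^ n"
    using y by (simp add: exp_of_nat_mult exp_ln)
  finally have lower: "exp (- a) - exp (- a) * (2 * a^2 / real n) \<le> (1 - y) ^ n"
    by (simp add: algebra_simps)
  have "exp (- a) * (2 * a^2 / real n) \<le> 1 * (2 / real n)"
    using a n by (intro mult_mono divide_right_mono) (auto simp: power_le_one)
  then show ?thesis
    using upper lower by (simp add: y_def abs_if)
qed

lemma square_over_n_tendsto_zero:
  fixes f :: "nat \<Rightarrow> real"
  assumes "f \<in> o(\<lambda>n. sqrt (real n))"
  shows "(\<lambda>n. f n ^ 2 / real n) \<longlonglongrightarrow> 0"
proof -
  have "(\<lambda>n. f n * f n) \<in> o(\<lambda>n. sqrt (real n) * sqrt (real n))"
    using landau_o.small_mult[OF assms assms] .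
  then show ?thesis
    by (auto dest: smalloD_tendsto simp: power2_eq_square)
qed

section \<open>The matched set of MMP-ALG\<close>

lemma pmf_embed_pmf_option:
  fixes f :: "'a \<Rightarrow> real"
  assumes A: "finite A" and f: "\<And>a. a \<in> A \<Longrightarrow> 0 \<le> f a" and f_sum: "sum f A \<le> 1"
  shows "pmf (embed_pmf (\<lambda>w. case w of None \<Rightarrow> 1 - sum f A | Some a \<Rightarrow> if a \<in> A then f a else 0)) w
       = (case w of None \<Rightarrow> 1 - sum f A | Some a \<Rightarrow> if a \<in> A then f a else 0)"
proof (rule pmf_embed_pmf)
  let ?g = "\<lambda>w. case w of None \<Rightarrow> 1 - sum f A | Some a \<Rightarrow> if a \<in> A then f a else 0"
  show "0 \<le> ?g w" for w
    using f f_sum by (auto split: option.splits)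
  have "(\<integral>\<^sup>+ w. ennreal (?g w) \<partial>count_space UNIV) = (\<Sum>w\<in>insert None (Some ` A). ennreal (?g w))"
    using A by (intro nn_integral_count_space') (auto split: option.splits)
  also have "\<dots> = ennreal (\<Sum>w\<in>insert None (Some ` A). ?g w)"
    using f f_sum by (intro sum_ennreal) (auto split: option.splits)
  also have "(\<Sum>w\<in>insert None (Some ` A). ?g w) = 1"
    using A by (simp add: sum.reindex)
  finally show "(\<integral>\<^sup>+ w. ennreal (?g w) \<partial>count_space UNIV) = 1"
    by simp
qed

lemma matched_set_eq_iid_union:
  "map_pmf ((`) fst) (mmp_run V E p x T n)
     = iid_union_pmf (map_pmf (\<lambda>w. fst ` set_option w) (mmp_round V E p x T)) n"
proof (induction n)
  case (Suc n)
  have step: "fst ` mmp_step M w = fst ` M \<union> fst ` set_option w" for M :: "('u \<times> 'v) set" and w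
    by (auto simp: mmp_step_def split: option.splits)
  show ?case
    using Suc[symmetric] by (simp add: step map_bind_pmf bind_map_pmf pmf.map_comp o_def)
qed simp

locale mmp_instance =
  fixes U :: "'u set" and V :: "'v set" and E :: "('u \<times> 'v) set"
    and p :: "'v \<Rightarrow> real" and x :: "'u \<times> 'v \<Rightarrow> real" and T :: nat
  assumes finite_U: "finite U" and finite_V: "finite V"
    and E_subset: "E \<subseteq> U \<times> V"
    and p_nonneg: "\<And>v. v \<in> V \<Longrightarrow> 0 \<le> p v"
    and p_sum: "sum p V \<le> 1"
    and x_range: "\<And>e. e \<in> E \<Longrightarrow> 0 \<le> x e \<and> x e \<le> 1"
    and x_v: "\<And>v. v \<in> V \<Longrightarrow> (\<Sum>e\<in>edges_at_v E v. x e) \<le> real T * p v"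
    and x_u: "\<And>u. u \<in> U \<Longrightarrow> (\<Sum>e\<in>edges_at_u E u. x e) \<le> 1"
    and T_pos: "0 < T"
begin

lemma finite_E: "finite E"
  using finite_subset[OF E_subset] finite_U finite_V by blast

lemma finite_edges_at_v: "finite (edges_at_v E v)"
  using finite_E by (simp add: edges_at_v_def)

lemma pmf_arrival_pmf: "pmf (arrival_pmf V p) (Some v) = (if v \<in> V then p v else 0)"
  unfolding arrival_pmf_def
  by (subst pmf_embed_pmf_option[OF finite_V]) (use p_nonneg p_sum in auto)

lemma set_arrival_pmf: "set_pmf (arrival_pmf V p) \<subseteq> insert None (Some ` V)"
proof
  fix w assume "w \<in> set_pmf (arrival_pmf V p)"
  then show "w \<in> insert None (Some ` V)"
    by (cases w) (auto simp: set_pmf_iff pmf_arrival_pmf split: if_splits)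
qed

lemma pmf_edge_pmf:
  assumes v: "v \<in> V"
  shows "pmf (edge_pmf E x (real T * p v) v) (Some e)
       = (if e \<in> edges_at_v E v then x e / (real T * p v) else 0)"
proof -
  have sum_le: "(\<Sum>e\<in>edges_at_v E v. x e / (real T * p v)) \<le> 1"
    using x_v[OF v] p_nonneg[OF v] T_pos
    by (cases "p v = 0") (simp_all add: sum_divide_distrib[symmetric] divide_le_eq_1)
  have nonneg: "0 \<le> x e / (real T * p v)" if "e \<in> edges_at_v E v" for e
    using that x_range p_nonneg[OF v] by (simp add: edges_at_v_def)
  have "edge_pmf E x (real T * p v) v = embed_pmf (\<lambda>w. case w of
      None \<Rightarrow> 1 - (\<Sum>e\<in>edges_at_v E v. x e / (real T * p v))
    | Some e \<Rightarrow> if e \<in> edges_at_v E v then x e / (real T * p v) else 0)"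
    unfolding edge_pmf_def by (simp add: sum_divide_distrib)
  then show ?thesis
    by (simp add: pmf_embed_pmf_option[OF finite_edges_at_v nonneg sum_le])
qed

text \<open>If \<open>p v = 0\<close> the constraint at \<open>v\<close> forces \<open>x e = 0\<close>, so the junk value \<open>x e / 0 = 0\<close>
  is harmless.\<close>
lemma arrival_times_edge_prob:
  assumes v: "v \<in> V" and e: "e \<in> edges_at_v E v"
  shows "p v * (x e / (real T * p v)) = x e / real T"
proof (cases "p v = 0")
  case True
  have "x e \<le> (\<Sum>e\<in>edges_at_v E v. x e)"
    using e finite_edges_at_v x_range by (intro member_le_sum) (auto simp: edges_at_v_def)
  then show ?thesis
    using True x_v[OF v] x_range[of e] e by (simp add: edges_at_v_def)
qed (use T_pos in simp)

lemma pmf_mmp_round: "pmf (mmp_round V E p x T) (Some e) = (if e \<in> E then x e / real T else 0)"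
proof -
  let ?edge = "\<lambda>v. edge_pmf E x (real T * p v) v"
  have "pmf (mmp_round V E p x T) (Some e) = (\<Sum>v\<in>V. pmf (?edge v) (Some e) * p v)"
    unfolding mmp_round_def using finite_V set_arrival_pmf
    by (subst pmf_bind_eq_sum[where W = "insert None (Some ` V)"])
       (auto simp: sum.reindex pmf_arrival_pmf)
  also have "\<dots> = (\<Sum>v\<in>V. if v = snd e \<and> e \<in> E then x e / real T else 0)"
  proof (intro sum.cong refl)
    fix v assume v: "v \<in> V"
    show "pmf (?edge v) (Some e) * p v = (if v = snd e \<and> e \<in> E then x e / real T else 0)"
      using arrival_times_edge_prob[OF v, of e]
      by (auto simp: pmf_edge_pmf[OF v] edges_at_v_def mult.commute)
  qed
  also have "\<dots> = (if e \<in> E then x e / real T else 0)"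
    using finite_V E_subset by (auto simp: sum.If_cases)
  finally show ?thesis .
qed

lemma set_mmp_round: "set_pmf (mmp_round V E p x T) \<subseteq> insert None (Some ` E)"
proof
  fix w assume "w \<in> set_pmf (mmp_round V E p x T)"
  then show "w \<in> insert None (Some ` E)"
    by (cases w) (auto simp: set_pmf_iff pmf_mmp_round split: if_splits)
qed

definition hit_pmf :: "'u set pmf" where
  "hit_pmf = map_pmf (\<lambda>w. fst ` set_option w) (mmp_round V E p x T)"

lemma set_hit_pmf: "set_pmf hit_pmf \<subseteq> insert {} ((\<lambda>u. {u}) ` U)"
  using set_mmp_round E_subset unfolding hit_pmf_def by fastforce

lemma marg_hit_pmf: "marg hit_pmf u = xstar_u E x u / real T"
proof -
  let ?R = "mmp_round V E p x T"
  have "{w. u \<in> fst ` set_option w} \<inter> set_pmf ?R = Some ` edges_at_u E u \<inter> set_pmf ?R"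
    using set_mmp_round by (auto simp: edges_at_u_def)
  then have "marg hit_pmf u = measure ?R (Some ` edges_at_u E u)"
    unfolding marg_def hit_pmf_def by (simp add: vimage_def) (metis measure_Int_set_pmf)
  also have "\<dots> = (\<Sum>e\<in>edges_at_u E u. x e / real T)"
    using finite_E by (subst measure_measure_pmf_finite)
      (auto simp: sum.reindex pmf_mmp_round edges_at_u_def intro!: sum.cong)
  also have "\<dots> = xstar_u E x u / real T"
    by (simp add: xstar_u_def sum_divide_distrib)
  finally show ?thesis .
qed

lemma xstar_u_le_1: "xstar_u E x u \<le> 1"
proof (cases "u \<in> U")
  case False
  then have "edges_at_u E u = {}"
    using E_subset by (auto simp: edges_at_u_def)
  then show ?thesis
    by (simp add: xstar_u_def)
qed (simp add: xstar_u_def x_u)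

lemma xstar_u_nonneg: "0 \<le> xstar_u E x u"
  unfolding xstar_u_def using x_range by (auto simp: edges_at_u_def intro: sum_nonneg)

lemma matched_pmf_eq_iid_union: "matched_pmf V E p x T = iid_union_pmf hit_pmf T"
  unfolding matched_pmf_def hit_pmf_def by (rule matched_set_eq_iid_union)

lemma tv_from_indep_matched_le: "tv_from_indep U (matched_pmf V E p x T) \<le> real (card U) ^ 2 / real T"
proof -
  have "(\<Sum>u\<in>U. marg hit_pmf u) \<le> (\<Sum>u\<in>U. 1 / real T)"
    using xstar_u_le_1 by (intro sum_mono) (simp add: marg_hit_pmf divide_right_mono)
  then have "(\<Sum>u\<in>U. marg hit_pmf u) ^ 2 \<le> (real (card U) / real T) ^ 2"
    by (intro power_mono) (simp_all add: sum_nonneg marg_nonneg)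
  then have "real T * (\<Sum>u\<in>U. marg hit_pmf u) ^ 2 \<le> real (card U) ^ 2 / real T"
    using T_pos by (simp add: power2_eq_square field_simps)
  then show ?thesis
    using tv_from_indep_iid_union_le[OF finite_U set_hit_pmf, of T]
    by (simp add: matched_pmf_eq_iid_union)
qed

lemma marg_matched_pmf: "marg (matched_pmf V E p x T) u = 1 - (1 - xstar_u E x u / real T) ^ T"
  by (simp add: matched_pmf_eq_iid_union marg_iid_union_pmf marg_hit_pmf)

lemma marg_matched_pmf_approx:
  assumes "2 \<le> T"
  shows "\<bar>marg (matched_pmf V E p x T) u - (1 - exp (- xstar_u E x u))\<bar> \<le> 2 / real T"
  using one_minus_div_power_approx_exp[OF xstar_u_nonneg xstar_u_le_1 assms]
  by (simp add: marg_matched_pmf abs_minus_commute)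

end

theorem lemma2:
  fixes U :: "nat \<Rightarrow> 'u set" and V :: "nat \<Rightarrow> 'v set" and E :: "nat \<Rightarrow> ('u \<times> 'v) set"
    and p :: "nat \<Rightarrow> 'v \<Rightarrow> real" and x :: "nat \<Rightarrow> ('u \<times> 'v) \<Rightarrow> real"
  assumes finU: "\<And>T. finite (U T)" and finV: "\<And>T. finite (V T)"
    and E_sub: "\<And>T. E T \<subseteq> U T \<times> V T"
    and p_nonneg: "\<And>T v. v \<in> V T \<Longrightarrow> p T v \<ge> 0"
    and p_sum: "\<And>T. sum (p T) (V T) \<le> 1"
    and r_le1: "\<And>T v. v \<in> V T \<Longrightarrow> real T * p T v \<le> 1"
    and x_range: "\<And>T e. e \<in> E T \<Longrightarrow> 0 \<le> x T e \<and> x T e \<le> 1"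
    and x_v: "\<And>T v. v \<in> V T \<Longrightarrow> (\<Sum>e\<in>edges_at_v (E T) v. x T e) \<le> real T * p T v"
    and x_u: "\<And>T u. u \<in> U T \<Longrightarrow> (\<Sum>e\<in>edges_at_u (E T) u. x T e) \<le> 1"
    and U_small: "(\<lambda>T. real (card (U T))) \<in> o(\<lambda>T. sqrt (real T))"
  shows "(\<lambda>T. tv_from_indep (U T) (matched_pmf (V T) (E T) (p T) (x T) T)) \<longlonglongrightarrow> 0
         \<and> (\<forall>\<epsilon>>0. \<forall>\<^sub>F T in sequentially. \<forall>u\<in>U T.
           \<bar>marg (matched_pmf (V T) (E T) (p T) (x T) T) u - (1 - exp (- xstar_u (E T) (x T) u))\<bar> < \<epsilon>)"
proof -
  have inst: "mmp_instance (U T) (V T) (E T) (p T) (x T) T" if "0 < T" for T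
    using that by unfold_locales (simp_all add: finU finV E_sub p_nonneg p_sum x_range x_v x_u)
  have tv_le: "\<forall>\<^sub>F T in sequentially. tv_from_indep (U T) (matched_pmf (V T) (E T) (p T) (x T) T)
      \<le> real (card (U T)) ^ 2 / real T"
    using eventually_gt_at_top[of 0] by eventually_elim (rule mmp_instance.tv_from_indep_matched_le[OF inst])
  have marg_le: "\<forall>\<^sub>F T in sequentially. \<forall>u\<in>U T.
      \<bar>marg (matched_pmf (V T) (E T) (p T) (x T) T) u - (1 - exp (- xstar_u (E T) (x T) u))\<bar> \<le> 2 / real T"
    using eventually_ge_at_top[of 2] by eventually_elim (simp add: mmp_instance.marg_matched_pmf_approx[OF inst])
  show ?thesis
  proof (intro conjI allI impI)
    show "(\<lambda>T. tv_from_indep (U T) (matched_pmf (V T) (E T) (p T) (x T) T)) \<longlonglongrightarrow> 0"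
      using tendsto_sandwich[OF _ tv_le tendsto_const square_over_n_tendsto_zero[OF U_small]]
      by (simp add: tv_from_indep_nonneg)
    fix \<epsilon> :: real assume "0 < \<epsilon>"
    with lim_const_over_n[of 2] have "\<forall>\<^sub>F T in sequentially. 2 / real T < \<epsilon>"
      by (rule order_tendstoD)
    with marg_le show "\<forall>\<^sub>F T in sequentially. \<forall>u\<in>U T.
        \<bar>marg (matched_pmf (V T) (E T) (p T) (x T) T) u - (1 - exp (- xstar_u (E T) (x T) u))\<bar> < \<epsilon>"
      by eventually_elim auto
  qed
qed

end
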